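(* For every natural number $\bar{q} > 1$ there exist two non-isomorphic bipartite graphs $G_\mathrm{b} = (L,R,E_\mathrm{b})$ and $G_\mathrm{e} = (L,R,E_\mathrm{e})$ on the same node sets, with the same left degree sequence, the same right degree sequence, and the same number of butterflies, $\beta(G_\mathrm{b}) = \beta(G_\mathrm{e})$, such that the following holds. Let $\langle \rho_1,\dots,\rho_z\rangle$ be any sequence of operations, where each $\rho_i$ is a $p_i$-BSO with $p_i \in \mathbb{N}^+$, such that applying $\rho_1,\dots,\rho_z$ successively to $G_\mathrm{b}$ yields $G_\mathrm{e}$, and such that every intermediate graph $G^i$ (obtained from $G_\mathrm{b}$ by applying $\rho_1,\dots,\rho_i$) has the same left and right degree sequences as $G_\mathrm{b}$ and $\beta(G^i) = \beta(G_\mathrm{b})$. Then there exists $\ell \in \{1,\dots,z\}$ with $p_\ell \ge \bar{q}$.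
   Context: A bipartite graph is a triple $G=(L,R,E)$ with $L,R$ disjoint finite node sets and $E \subseteq L\times R$; edges are undirected and written $(u,a)$ with $u\in L$, $a \in R$. $N_G(v)$ denotes the set of neighbors of $v$ and $\deg_G(v)=|N_G(v)|$. With fixed labelings $u_1,\dots,u_{|L|}$ of $L$ and $a_1,\dots,a_{|R|}$ of $R$, the left (right) degree sequence is $(\deg_G(u_1),\dots,\deg_G(u_{|L|}))$ (resp. $(\deg_G(a_1),\dots,\deg_G(a_{|R|}))$). A butterfly in $G$ is a set $\{u,v,a,b\}$ with $u\neq v \in L$, $a \neq b \in R$ and $\{(u,a),(u,b),(v,a),(v,b)\}\subseteq E$; $\beta(G)$ denotes the number of butterflies in $G$. For $q\in\mathbb{N}^+$, a $q$-edge bipartite swap operation ($q$-BSO) on $G$ is a pair $(S,\sigma)$ where $S=(e_1,\dots,e_q)$ is a vector of $q$ distinct edges $e_i=(u_i,a_i)\in E$ and $\sigma$ is a derangement of $\{1,\dots,q\}$ (a permutation with no fixed point) such that $(u_j,a_{\sigma(j)})\notin E$ for every $j$; applying it produces the graph $(L,R,(E\setminus S)\cup\{(u_j,a_{\sigma(j)}): 1\le j\le q\})$, which has the same left and right degree sequences as $G$. *)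

theory Defs
  imports Main "HOL-Combinatorics.Permutations"
begin

type_synonym node = nat
type_synonym bedges = "(node \<times> node) set"

definition bip_graph :: "node set \<Rightarrow> node set \<Rightarrow> bedges \<Rightarrow> bool" where
  "bip_graph L R E \<longleftrightarrow> finite L \<and> finite R \<and> L \<inter> R = {} \<and> E \<subseteq> L \<times> R"

definition nbrs :: "bedges \<Rightarrow> node \<Rightarrow> node set" where
  "nbrs E v = {w. (v, w) \<in> E \<or> (w, v) \<in> E}"

definition deg :: "bedges \<Rightarrow> node \<Rightarrow> nat" where
  "deg E v = card (nbrs E v)"

definition same_degrees :: "node set \<Rightarrow> node set \<Rightarrow> bedges \<Rightarrow> bedges \<Rightarrow> bool" where
  "same_degrees L R E1 E2 \<longleftrightarrow> (\<forall>u\<in>L. deg E1 u = deg E2 u) \<and> (\<forall>a\<in>R. deg E1 a = deg E2 a)"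

definition butterflies :: "node set \<Rightarrow> node set \<Rightarrow> bedges \<Rightarrow> node set set" where
  "butterflies L R E = {{u, v, a, b} | u v a b. u \<in> L \<and> v \<in> L \<and> u \<noteq> v \<and> a \<in> R \<and> b \<in> R \<and> a \<noteq> b
       \<and> (u, a) \<in> E \<and> (u, b) \<in> E \<and> (v, a) \<in> E \<and> (v, b) \<in> E}"

definition beta :: "node set \<Rightarrow> node set \<Rightarrow> bedges \<Rightarrow> nat" where
  "beta L R E = card (butterflies L R E)"

definition bip_iso :: "node set \<Rightarrow> node set \<Rightarrow> bedges \<Rightarrow> bedges \<Rightarrow> bool" where
  "bip_iso L R E1 E2 \<longleftrightarrow> (\<exists>f g. bij_betw f L L \<and> bij_betw g R R \<and>
      (\<forall>u\<in>L. \<forall>a\<in>R. (u, a) \<in> E1 \<longleftrightarrow> (f u, g a) \<in> E2))"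

text \<open>A q-edge bipartite swap operation (S, sigma) on E; indices are 0-based:
  S is a list of q distinct edges of E, sigma a derangement of {0..<q}.\<close>
definition is_bso :: "bedges \<Rightarrow> nat \<Rightarrow> (node \<times> node) list \<Rightarrow> (nat \<Rightarrow> nat) \<Rightarrow> bool" where
  "is_bso E q S \<sigma> \<longleftrightarrow> q > 0 \<and> length S = q \<and> distinct S \<and> set S \<subseteq> E \<and>
      \<sigma> permutes {..<q} \<and> (\<forall>j<q. \<sigma> j \<noteq> j) \<and>
      (\<forall>j<q. (fst (S ! j), snd (S ! \<sigma> j)) \<notin> E)"

definition bso_apply :: "bedges \<Rightarrow> (node \<times> node) list \<Rightarrow> (nat \<Rightarrow> nat) \<Rightarrow> bedges" where
  "bso_apply E S \<sigma> = (E - set S) \<union> {(fst (S ! j), snd (S ! \<sigma> j)) | j. j < length S}"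

end

theory Submission
  imports Defs
begin

(* Take R = {0, 1, 2, 3} and 12k left nodes of degree 2. Up to renaming the left nodes, such a
   graph is given by the numbers c_P of left nodes whose neighbourhood is the pair P of right
   nodes. Right degrees 6k force c_P = c_(R - P), and then beta = sum of (c_P choose 2) fixes the
   sum of squares: the triple (c_01, c_02, c_03) lies on the circle x + y + z = 6k,
   x^2 + y^2 + z^2 = 18k^2. G_b is the point (0, 3k, 3k), G_e the point (k, k, 4k).
   A q-BSO changes the neighbourhoods of at most q left nodes, hence every c_P by at most q.
   For k = qbar^2 no other lattice point of the circle lies that close to (0, 3k, 3k) when
   q < qbar, so swaps of fewer than qbar edges that preserve degrees and beta never leave
   G_b's point. Non-isomorphism: all six classes of G_e are nonempty, the class {0, 1} of G_b
   is empty. *)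

definition left_nbhd :: "bedges \<Rightarrow> node \<Rightarrow> node set" where
  "left_nbhd E u = {a. (u, a) \<in> E}"

definition nbhd_class :: "node set \<Rightarrow> bedges \<Rightarrow> node set \<Rightarrow> node set" where
  "nbhd_class L E P = {u \<in> L. left_nbhd E u = P}"

definition doubletons :: "'a set \<Rightarrow> 'a set set" where
  "doubletons A = {P. P \<subseteq> A \<and> card P = 2}"

lemma card_doubletons: "finite A \<Longrightarrow> card (doubletons A) = card A choose 2"
  unfolding doubletons_def by (rule n_subsets)

lemma finite_doubletons: "finite A \<Longrightarrow> finite (doubletons A)"
  unfolding doubletons_def by simp

lemma deg_left_node:
  assumes "bip_graph L R E" "u \<in> L"
  shows "deg E u = card (left_nbhd E u)"
proof -
  have "nbrs E u = left_nbhd E u"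
    using assms unfolding bip_graph_def nbrs_def left_nbhd_def by blast
  thus ?thesis by (simp add: deg_def)
qed

lemma deg_right_node_eq_sum_nbhd_classes:
  assumes bg: "bip_graph L R E" and a: "a \<in> R" and two: "\<forall>u\<in>L. card (left_nbhd E u) = 2"
  shows "deg E a = (\<Sum>P \<in> {P \<in> doubletons R. a \<in> P}. card (nbhd_class L E P))"
proof -
  have fin: "finite L" "finite R" and sub: "E \<subseteq> L \<times> R" and dis: "L \<inter> R = {}"
    using bg unfolding bip_graph_def by auto
  have "nbrs E a = {u \<in> L. a \<in> left_nbhd E u}"
    using sub dis a unfolding nbrs_def left_nbhd_def by blast
  also have "\<dots> = (\<Union>P \<in> {P \<in> doubletons R. a \<in> P}. nbhd_class L E P)"
  proof (intro equalityI subsetI)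
    fix u assume u: "u \<in> {u \<in> L. a \<in> left_nbhd E u}"
    have "left_nbhd E u \<in> doubletons R"
      using sub u two unfolding doubletons_def left_nbhd_def by auto
    thus "u \<in> (\<Union>P \<in> {P \<in> doubletons R. a \<in> P}. nbhd_class L E P)"
      using u unfolding nbhd_class_def by auto
  qed (auto simp: nbhd_class_def)
  finally have "deg E a = card (\<Union>P \<in> {P \<in> doubletons R. a \<in> P}. nbhd_class L E P)"
    by (simp add: deg_def)
  also have "\<dots> = (\<Sum>P \<in> {P \<in> doubletons R. a \<in> P}. card (nbhd_class L E P))"
    using fin by (intro card_UN_disjoint) (auto simp: doubletons_def nbhd_class_def)
  finally show ?thesis .
qed

text \<open>When every left node has degree 2, a butterfly is a pair of left nodes together with
  their common neighbourhood.\<close>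
lemma butterflies_eq_image_Sigma:
  assumes bg: "bip_graph L R E" and two: "\<forall>u\<in>L. card (left_nbhd E u) = 2"
  shows "butterflies L R E =
    (\<lambda>(P, B). B \<union> P) ` (SIGMA P : doubletons R. doubletons (nbhd_class L E P))"
proof (intro equalityI subsetI)
  have fin: "finite R" and sub: "E \<subseteq> L \<times> R" using bg unfolding bip_graph_def by auto
  fix X assume "X \<in> butterflies L R E"
  then obtain u v a b where X: "X = {u, v, a, b}"
    and h: "u \<in> L" "v \<in> L" "u \<noteq> v" "a \<in> R" "b \<in> R" "a \<noteq> b"
      "(u, a) \<in> E" "(u, b) \<in> E" "(v, a) \<in> E" "(v, b) \<in> E"
    unfolding butterflies_def by blast
  have "left_nbhd E w = {a, b}" if "w \<in> L" "(w, a) \<in> E" "(w, b) \<in> E" for w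
  proof (rule sym, rule card_subset_eq)
    show "finite (left_nbhd E w)"
      using sub fin by (auto simp: left_nbhd_def intro: finite_subset[of _ R])
    show "{a, b} \<subseteq> left_nbhd E w" using that by (simp add: left_nbhd_def)
    show "card {a, b} = card (left_nbhd E w)" using two that h(6) by simp
  qed
  hence "({a, b}, {u, v}) \<in> (SIGMA P : doubletons R. doubletons (nbhd_class L E P))"
    using h by (auto simp: doubletons_def nbhd_class_def)
  moreover have "X = (\<lambda>(P, B). B \<union> P) ({a, b}, {u, v})" using X by auto
  ultimately show "X \<in> (\<lambda>(P, B). B \<union> P) ` (SIGMA P : doubletons R. doubletons (nbhd_class L E P))"
    by (rule rev_image_eqI)
next
  fix X assume "X \<in> (\<lambda>(P, B). B \<union> P) ` (SIGMA P : doubletons R. doubletons (nbhd_class L E P))"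
  then obtain P B where P: "P \<in> doubletons R" and B: "B \<in> doubletons (nbhd_class L E P)"
    and X: "X = B \<union> P" by auto
  obtain a b where ab: "P = {a, b}" "a \<noteq> b" "a \<in> R" "b \<in> R"
    using P by (auto simp: doubletons_def card_2_iff)
  obtain u v where uv: "B = {u, v}" "u \<noteq> v" "u \<in> L" "v \<in> L"
    "left_nbhd E u = P" "left_nbhd E v = P"
    using B by (auto simp: doubletons_def card_2_iff nbhd_class_def)
  have "X = {u, v, a, b}" using X ab uv by auto
  moreover have "(u, a) \<in> E" "(u, b) \<in> E" "(v, a) \<in> E" "(v, b) \<in> E"
    using ab uv by (auto simp: left_nbhd_def)
  ultimately show "X \<in> butterflies L R E"
    unfolding butterflies_def using ab uv by blast
qed

lemma beta_eq_sum_choose_two: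
  assumes bg: "bip_graph L R E" and two: "\<forall>u\<in>L. card (left_nbhd E u) = 2"
  shows "beta L R E = (\<Sum>P \<in> doubletons R. card (nbhd_class L E P) choose 2)"
proof -
  have fin: "finite L" "finite R" and dis: "L \<inter> R = {}"
    using bg unfolding bip_graph_def by auto
  let ?\<Sigma> = "SIGMA P : doubletons R. doubletons (nbhd_class L E P)"
  have "inj_on (\<lambda>(P, B). B \<union> P) ?\<Sigma>"
  proof (rule inj_onI, clarify)
    fix P B P' B'
    assume "P \<in> doubletons R" "B \<in> doubletons (nbhd_class L E P)"
      "P' \<in> doubletons R" "B' \<in> doubletons (nbhd_class L E P')" "B \<union> P = B' \<union> P'"
    moreover have "nbhd_class L E Q \<subseteq> L" for Q by (auto simp: nbhd_class_def)
    ultimately show "P = P' \<and> B = B'"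
      using dis unfolding doubletons_def by blast
  qed
  hence "beta L R E = card ?\<Sigma>"
    unfolding beta_def butterflies_eq_image_Sigma[OF bg two] by (rule card_image)
  also have "\<dots> = (\<Sum>P \<in> doubletons R. card (doubletons (nbhd_class L E P)))"
    using fin by (simp add: finite_doubletons nbhd_class_def)
  also have "\<dots> = (\<Sum>P \<in> doubletons R. card (nbhd_class L E P) choose 2)"
    using fin by (simp add: card_doubletons nbhd_class_def)
  finally show ?thesis .
qed

lemma bso_apply_subset_Times:
  assumes sub: "E \<subseteq> L \<times> R" and bso: "is_bso E q S \<sigma>"
  shows "bso_apply E S \<sigma> \<subseteq> L \<times> R"
proof -
  have "(fst (S ! j), snd (S ! \<sigma> j)) \<in> L \<times> R" if j: "j < length S" for j
  proof -
    have "\<sigma> j < length S"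
      using bso j permutes_in_image[of \<sigma> "{..<q}"] unfolding is_bso_def by auto
    hence "S ! j \<in> E" "S ! \<sigma> j \<in> E" using bso j nth_mem unfolding is_bso_def by blast+
    thus ?thesis using sub by (auto simp: mem_Times_iff)
  qed
  thus ?thesis using sub unfolding bso_apply_def by blast
qed

lemma left_nbhd_bso_apply_untouched:
  assumes "u \<notin> fst ` set S"
  shows "left_nbhd (bso_apply E S \<sigma>) u = left_nbhd E u"
proof -
  have "(u, a) \<notin> set S" for a using assms by force
  moreover have "fst (S ! j) \<noteq> u" if "j < length S" for j
    using assms that by (metis image_eqI nth_mem)
  ultimately show ?thesis unfolding left_nbhd_def bso_apply_def by auto
qed

text \<open>A q-BSO only changes the neighbourhoods of the at most q left end points of its edges.\<close>
lemma card_nbhd_class_bso_apply_diff_le: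
  assumes fin: "finite L" and bso: "is_bso E q S \<sigma>"
  shows "\<bar>int (card (nbhd_class L E P)) - int (card (nbhd_class L (bso_apply E S \<sigma>) P))\<bar> \<le> int q"
proof -
  define U where "U = fst ` set S"
  have "card U \<le> q"
    using bso unfolding U_def is_bso_def by (metis card_image_le card_length finite_set order_trans)
  moreover have "card (nbhd_class L E1 P) \<le> card (nbhd_class L E2 P) + card U"
    if "\<forall>u. u \<notin> U \<longrightarrow> left_nbhd E1 u = left_nbhd E2 u" for E1 E2
  proof -
    have "nbhd_class L E1 P \<subseteq> nbhd_class L E2 P \<union> U"
      using that unfolding nbhd_class_def by auto
    hence "card (nbhd_class L E1 P) \<le> card (nbhd_class L E2 P \<union> U)"
      using fin by (intro card_mono) (auto simp: U_def nbhd_class_def)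
    also have "\<dots> \<le> card (nbhd_class L E2 P) + card U" by (rule card_Un_le)
    finally show ?thesis .
  qed
  moreover have "\<forall>u. u \<notin> U \<longrightarrow> left_nbhd (bso_apply E S \<sigma>) u = left_nbhd E u"
    unfolding U_def using left_nbhd_bso_apply_untouched by blast
  ultimately show ?thesis by (smt (verit) of_nat_add of_nat_mono)
qed

lemma circle_meets_plane_x_eq_0:
  fixes y z k :: int
  assumes "y + z = 6 * k" "y\<^sup>2 + z\<^sup>2 = 18 * k\<^sup>2"
  shows "y = 3 * k \<and> z = 3 * k"
proof -
  have "(y - z)\<^sup>2 = 2 * (y\<^sup>2 + z\<^sup>2) - (y + z)\<^sup>2" by (simp add: algebra_simps power2_eq_square)
  also have "\<dots> = 0" using assms by (simp add: power_mult_distrib)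
  finally show ?thesis using assms(1) by simp
qed

text \<open>With s = y - 3k and t = z - 3k the equations become x + s + t = 0 and
  x^2 + s^2 + t^2 = 6kx, so 6k|x| \<le> 3q^2 < 6k.\<close>
lemma circle_points_near_0_3k_3k:
  fixes x y z k q :: int
  assumes sum: "x + y + z = 6 * k" and sq: "x\<^sup>2 + y\<^sup>2 + z\<^sup>2 = 18 * k\<^sup>2"
    and near: "\<bar>x\<bar> \<le> q" "\<bar>y - 3 * k\<bar> \<le> q" "\<bar>z - 3 * k\<bar> \<le> q" and small: "q\<^sup>2 < 2 * k"
  shows "x = 0"
proof -
  define s t where "s = y - 3 * k" and "t = z - 3 * k"
  have "0 \<le> q" using near(1) by linarith
  have "x\<^sup>2 + s\<^sup>2 + t\<^sup>2 = 6 * k * x"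
    using sum sq unfolding s_def t_def by (simp add: algebra_simps power2_eq_square) algebra
  moreover have "x\<^sup>2 \<le> q\<^sup>2" "s\<^sup>2 \<le> q\<^sup>2" "t\<^sup>2 \<le> q\<^sup>2"
    using near \<open>0 \<le> q\<close> unfolding s_def t_def by (simp_all add: power2_le_iff_abs_le)
  ultimately have "0 \<le> 6 * k * x" "6 * k * x < 6 * k * 1"
    using small by (metis add_nonneg_nonneg zero_le_power2, linarith)
  moreover have "0 < 6 * k" using small by (smt (verit) zero_le_power2)
  ultimately show ?thesis by (simp add: zero_le_mult_iff mult_less_cancel_left_pos)
qed

definition right_nodes :: "node set" where
  "right_nodes = {0, 1, 2, 3}"

definition left_nodes :: "nat \<Rightarrow> node set" where
  "left_nodes k = {4..<4 + 12 * k}"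

lemma left_nodes_right_nodes:
  "finite (left_nodes k)" "finite right_nodes" "left_nodes k \<inter> right_nodes = {}"
  unfolding left_nodes_def right_nodes_def by auto

lemma doubletons_right_nodes:
  "doubletons right_nodes = {{0, 1}, {0, 2}, {0, 3}, {1, 2}, {1, 3}, {2, 3}}"
proof (intro equalityI subsetI)
  fix P assume "P \<in> doubletons right_nodes"
  then obtain a b where "P = {a, b}" "a \<noteq> b" "a \<in> right_nodes" "b \<in> right_nodes"
    unfolding doubletons_def by (auto simp: card_2_iff)
  thus "P \<in> {{0, 1}, {0, 2}, {0, 3}, {1, 2}, {1, 3}, {2, 3}}"
    unfolding right_nodes_def by (auto simp: insert_commute)
qed (auto simp: doubletons_def right_nodes_def)

abbreviation cnt :: "node set \<Rightarrow> bedges \<Rightarrow> node \<Rightarrow> node \<Rightarrow> nat" where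
  "cnt L E a b \<equiv> card (nbhd_class L E {a, b})"

lemma deg_and_beta_over_right_nodes:
  assumes bg: "bip_graph L right_nodes E" and two: "\<forall>u\<in>L. card (left_nbhd E u) = 2"
  shows "deg E 0 = cnt L E 0 1 + cnt L E 0 2 + cnt L E 0 3"
    and "deg E 1 = cnt L E 0 1 + cnt L E 1 2 + cnt L E 1 3"
    and "deg E 2 = cnt L E 0 2 + cnt L E 1 2 + cnt L E 2 3"
    and "deg E 3 = cnt L E 0 3 + cnt L E 1 3 + cnt L E 2 3"
    and "beta L right_nodes E = (cnt L E 0 1 choose 2) + (cnt L E 0 2 choose 2)
      + (cnt L E 0 3 choose 2) + (cnt L E 1 2 choose 2) + (cnt L E 1 3 choose 2)
      + (cnt L E 2 3 choose 2)"
proof -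
  have deg: "deg E a = (\<Sum>P \<in> {P \<in> doubletons right_nodes. a \<in> P}. card (nbhd_class L E P))"
    if "a \<in> {0, 1, 2, 3}" for a
    using deg_right_node_eq_sum_nbhd_classes[OF bg _ two] that by (simp add: right_nodes_def)
  have pairs_at: "{P \<in> doubletons right_nodes. 0 \<in> P} = {{0, 1}, {0, 2}, {0, 3}}"
    "{P \<in> doubletons right_nodes. 1 \<in> P} = {{0, 1}, {1, 2}, {1, 3}}"
    "{P \<in> doubletons right_nodes. 2 \<in> P} = {{0, 2}, {1, 2}, {2, 3}}"
    "{P \<in> doubletons right_nodes. 3 \<in> P} = {{0, 3}, {1, 3}, {2, 3}}"
    unfolding doubletons_right_nodes by auto
  show "deg E 0 = cnt L E 0 1 + cnt L E 0 2 + cnt L E 0 3"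
    using deg[of 0] unfolding pairs_at by (simp add: doubleton_eq_iff)
  show "deg E 1 = cnt L E 0 1 + cnt L E 1 2 + cnt L E 1 3"
    using deg[of 1] unfolding pairs_at by (simp add: doubleton_eq_iff)
  show "deg E 2 = cnt L E 0 2 + cnt L E 1 2 + cnt L E 2 3"
    using deg[of 2] unfolding pairs_at by (simp add: doubleton_eq_iff)
  show "deg E 3 = cnt L E 0 3 + cnt L E 1 3 + cnt L E 2 3"
    using deg[of 3] unfolding pairs_at by (simp add: doubleton_eq_iff)
  show "beta L right_nodes E = (cnt L E 0 1 choose 2) + (cnt L E 0 2 choose 2)
      + (cnt L E 0 3 choose 2) + (cnt L E 1 2 choose 2) + (cnt L E 1 3 choose 2)
      + (cnt L E 2 3 choose 2)"
    using beta_eq_sum_choose_two[OF bg two]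
    by (simp add: doubletons_right_nodes doubleton_eq_iff add.assoc)
qed

definition graph_of :: "node set \<Rightarrow> (node \<Rightarrow> node set) \<Rightarrow> bedges" where
  "graph_of L p = {(u, a). u \<in> L \<and> a \<in> p u}"

lemma left_nbhd_graph_of: "u \<in> L \<Longrightarrow> left_nbhd (graph_of L p) u = p u"
  unfolding left_nbhd_def graph_of_def by simp

lemma nbhd_class_graph_of: "nbhd_class L (graph_of L p) P = {u \<in> L. p u = P}"
  unfolding nbhd_class_def by (auto simp: left_nbhd_graph_of)

definition pairs_b :: "nat \<Rightarrow> node \<Rightarrow> node set" where
  "pairs_b k u =
    (if u < 4 + 3 * k then {0, 2} else if u < 4 + 6 * k then {1, 3}
     else if u < 4 + 9 * k then {0, 3} else {1, 2})"

definition pairs_e :: "nat \<Rightarrow> node \<Rightarrow> node set" where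
  "pairs_e k u =
    (if u < 4 + k then {0, 1} else if u < 4 + 2 * k then {2, 3} else if u < 4 + 3 * k then {0, 2}
     else if u < 4 + 4 * k then {1, 3} else if u < 4 + 8 * k then {0, 3} else {1, 2})"

definition Eb :: "nat \<Rightarrow> bedges" where
  "Eb k = graph_of (left_nodes k) (pairs_b k)"

definition Ee :: "nat \<Rightarrow> bedges" where
  "Ee k = graph_of (left_nodes k) (pairs_e k)"

lemma nbhd_classes_Eb:
  "nbhd_class (left_nodes k) (Eb k) {0, 1} = {}"
  "nbhd_class (left_nodes k) (Eb k) {0, 2} = {4..<4 + 3 * k}"
  "nbhd_class (left_nodes k) (Eb k) {1, 3} = {4 + 3 * k..<4 + 6 * k}"
  "nbhd_class (left_nodes k) (Eb k) {0, 3} = {4 + 6 * k..<4 + 9 * k}"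
  "nbhd_class (left_nodes k) (Eb k) {1, 2} = {4 + 9 * k..<4 + 12 * k}"
  "nbhd_class (left_nodes k) (Eb k) {2, 3} = {}"
  unfolding Eb_def nbhd_class_graph_of left_nodes_def pairs_b_def
  by (auto simp: doubleton_eq_iff)

lemma Eb_cnt:
  "cnt (left_nodes k) (Eb k) 0 1 = 0" "cnt (left_nodes k) (Eb k) 0 2 = 3 * k"
  "cnt (left_nodes k) (Eb k) 0 3 = 3 * k" "cnt (left_nodes k) (Eb k) 1 2 = 3 * k"
  "cnt (left_nodes k) (Eb k) 1 3 = 3 * k" "cnt (left_nodes k) (Eb k) 2 3 = 0"
  using nbhd_classes_Eb[of k] by simp_all

lemma nbhd_classes_Ee:
  "nbhd_class (left_nodes k) (Ee k) {0, 1} = {4..<4 + k}"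
  "nbhd_class (left_nodes k) (Ee k) {2, 3} = {4 + k..<4 + 2 * k}"
  "nbhd_class (left_nodes k) (Ee k) {0, 2} = {4 + 2 * k..<4 + 3 * k}"
  "nbhd_class (left_nodes k) (Ee k) {1, 3} = {4 + 3 * k..<4 + 4 * k}"
  "nbhd_class (left_nodes k) (Ee k) {0, 3} = {4 + 4 * k..<4 + 8 * k}"
  "nbhd_class (left_nodes k) (Ee k) {1, 2} = {4 + 8 * k..<4 + 12 * k}"
  unfolding Ee_def nbhd_class_graph_of left_nodes_def pairs_e_def
  by (auto simp: doubleton_eq_iff)

lemma Ee_cnt:
  "cnt (left_nodes k) (Ee k) 0 1 = k" "cnt (left_nodes k) (Ee k) 0 2 = k"
  "cnt (left_nodes k) (Ee k) 0 3 = 4 * k" "cnt (left_nodes k) (Ee k) 1 2 = 4 * k"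
  "cnt (left_nodes k) (Ee k) 1 3 = k" "cnt (left_nodes k) (Ee k) 2 3 = k"
  using nbhd_classes_Ee[of k] by simp_all

lemma bip_graph_Eb: "bip_graph (left_nodes k) right_nodes (Eb k)"
  and bip_graph_Ee: "bip_graph (left_nodes k) right_nodes (Ee k)"
  unfolding bip_graph_def Eb_def Ee_def graph_of_def pairs_b_def pairs_e_def
  using left_nodes_right_nodes by (auto simp: right_nodes_def split: if_splits)

lemma card_left_nbhd_Eb: "u \<in> left_nodes k \<Longrightarrow> card (left_nbhd (Eb k) u) = 2"
  and card_left_nbhd_Ee: "u \<in> left_nodes k \<Longrightarrow> card (left_nbhd (Ee k) u) = 2"
  unfolding Eb_def Ee_def by (simp_all add: left_nbhd_graph_of pairs_b_def pairs_e_def)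

lemma deg_beta_Eb:
  "u \<in> left_nodes k \<Longrightarrow> deg (Eb k) u = 2"
  "a \<in> right_nodes \<Longrightarrow> deg (Eb k) a = 6 * k"
  "beta (left_nodes k) right_nodes (Eb k) = 4 * (3 * k choose 2)"
  using deg_left_node[OF bip_graph_Eb] card_left_nbhd_Eb
    deg_and_beta_over_right_nodes[OF bip_graph_Eb] Eb_cnt
  by (auto simp: right_nodes_def)

lemma deg_beta_Ee:
  "u \<in> left_nodes k \<Longrightarrow> deg (Ee k) u = 2"
  "a \<in> right_nodes \<Longrightarrow> deg (Ee k) a = 6 * k"
  "beta (left_nodes k) right_nodes (Ee k) = 4 * (k choose 2) + 2 * (4 * k choose 2)"
  using deg_left_node[OF bip_graph_Ee] card_left_nbhd_Ee
    deg_and_beta_over_right_nodes[OF bip_graph_Ee] Ee_cnt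
  by (auto simp: right_nodes_def)

lemma same_degrees_Eb_Ee: "same_degrees (left_nodes k) right_nodes (Eb k) (Ee k)"
  unfolding same_degrees_def by (simp add: deg_beta_Eb deg_beta_Ee)

lemma two_times_choose_two: "2 * int (n choose 2) = int n * (int n - 1)"
proof -
  have "even (n * (n - 1))" by (cases n) simp_all
  hence "2 * (n choose 2) = n * (n - 1)" by (simp add: choose_two)
  thus ?thesis by (cases n) (simp_all flip: of_nat_mult add: algebra_simps)
qed

lemma beta_Eb_eq_beta_Ee:
  "beta (left_nodes k) right_nodes (Eb k) = beta (left_nodes k) right_nodes (Ee k)"
proof -
  have "2 * int (beta (left_nodes k) right_nodes (Eb k)) = 4 * (2 * int (3 * k choose 2))"
    by (simp add: deg_beta_Eb)
  also have "\<dots> = 4 * (2 * int (k choose 2)) + 2 * (2 * int (4 * k choose 2))"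
    unfolding two_times_choose_two by (simp add: algebra_simps)
  also have "\<dots> = 2 * int (beta (left_nodes k) right_nodes (Ee k))"
    by (simp add: deg_beta_Ee)
  finally show ?thesis by simp
qed

lemma card_nbhd_class_Ee_ge:
  "P \<in> doubletons right_nodes \<Longrightarrow> k \<le> card (nbhd_class (left_nodes k) (Ee k) P)"
  unfolding doubletons_right_nodes using Ee_cnt[of k] by auto

lemma Eb_Ee_not_iso:
  assumes "0 < k"
  shows "\<not> bip_iso (left_nodes k) right_nodes (Eb k) (Ee k)"
proof
  assume "bip_iso (left_nodes k) right_nodes (Eb k) (Ee k)"
  then obtain f g where f: "bij_betw f (left_nodes k) (left_nodes k)"
    and g: "bij_betw g right_nodes right_nodes"
    and iso: "\<forall>u \<in> left_nodes k. \<forall>a \<in> right_nodes. (u, a) \<in> Eb k \<longleftrightarrow> (f u, g a) \<in> Ee k"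
    unfolding bip_iso_def by blast
  have 01: "0 \<in> right_nodes" "1 \<in> right_nodes" by (simp_all add: right_nodes_def)
  have "g 0 \<in> right_nodes" "g 1 \<in> right_nodes" "g 0 \<noteq> g 1"
    using bij_betw_apply[OF g] bij_betw_imp_inj_on[OF g] 01 by (auto dest: inj_onD)
  hence "{g 0, g 1} \<in> doubletons right_nodes" by (simp add: doubletons_def)
  hence "0 < card (nbhd_class (left_nodes k) (Ee k) {g 0, g 1})"
    using assms card_nbhd_class_Ee_ge by (metis order_less_le_trans)
  hence "nbhd_class (left_nodes k) (Ee k) {g 0, g 1} \<noteq> {}" by auto
  then obtain w where "w \<in> left_nodes k" "left_nbhd (Ee k) w = {g 0, g 1}"
    by (auto simp: nbhd_class_def)
  moreover obtain u where u: "u \<in> left_nodes k" "f u = w"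
    using bij_betw_imp_surj_on[OF f] \<open>w \<in> left_nodes k\<close> by (metis imageE)
  ultimately have "(f u, g 0) \<in> Ee k" "(f u, g 1) \<in> Ee k"
    by (simp_all add: left_nbhd_def set_eq_iff)
  hence "{0, 1} \<subseteq> pairs_b k u"
    using iso[rule_format, OF u(1)] 01 u(1) by (simp add: Eb_def graph_of_def)
  thus False unfolding pairs_b_def by (simp split: if_splits)
qed

lemma class_counts_on_circle:
  assumes sub: "E \<subseteq> left_nodes k \<times> right_nodes"
    and degs: "same_degrees (left_nodes k) right_nodes E (Eb k)"
    and bfly: "beta (left_nodes k) right_nodes E = beta (left_nodes k) right_nodes (Eb k)"
  defines "x \<equiv> int (cnt (left_nodes k) E 0 1)" and "y \<equiv> int (cnt (left_nodes k) E 0 2)"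
    and "z \<equiv> int (cnt (left_nodes k) E 0 3)"
  shows "x + y + z = 6 * int k" and "x\<^sup>2 + y\<^sup>2 + z\<^sup>2 = 18 * (int k)\<^sup>2"
proof -
  let ?L = "left_nodes k"
  have bg: "bip_graph ?L right_nodes E"
    using sub left_nodes_right_nodes unfolding bip_graph_def by blast
  have "\<forall>u \<in> ?L. card (left_nbhd E u) = 2"
    using degs deg_left_node[OF bg] deg_beta_Eb(1) unfolding same_degrees_def by metis
  note counts = deg_and_beta_over_right_nodes[OF bg this]
  have "deg E a = 6 * k" if "a \<in> right_nodes" for a
    using degs deg_beta_Eb(2) that unfolding same_degrees_def by metis
  hence "cnt ?L E 0 1 + cnt ?L E 0 2 + cnt ?L E 0 3 = 6 * k"
    and opposite: "cnt ?L E 2 3 = cnt ?L E 0 1" "cnt ?L E 1 3 = cnt ?L E 0 2"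
      "cnt ?L E 1 2 = cnt ?L E 0 3"
    using counts(1-4) by (simp_all add: right_nodes_def)
  then show "x + y + z = 6 * int k" unfolding x_def y_def z_def by linarith
  have "2 * ((cnt ?L E 0 1 choose 2) + (cnt ?L E 0 2 choose 2) + (cnt ?L E 0 3 choose 2))
      = 4 * (3 * k choose 2)"
    using bfly counts(5) opposite deg_beta_Eb(3) by simp
  hence "2 * (2 * int (cnt ?L E 0 1 choose 2) + 2 * int (cnt ?L E 0 2 choose 2)
      + 2 * int (cnt ?L E 0 3 choose 2)) = 4 * (2 * int (3 * k choose 2))"
    by (simp flip: of_nat_mult of_nat_add)
  hence "x * (x - 1) + y * (y - 1) + z * (z - 1) = 2 * (3 * int k * (3 * int k - 1))"
    unfolding two_times_choose_two x_def y_def z_def by simp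
  with \<open>x + y + z = 6 * int k\<close> show "x\<^sup>2 + y\<^sup>2 + z\<^sup>2 = 18 * (int k)\<^sup>2"
    by (simp add: algebra_simps power2_eq_square)
qed

lemma small_bso_keeps_class_01_empty:
  assumes sub: "E \<subseteq> left_nodes k \<times> right_nodes" and bso: "is_bso E q S \<sigma>"
    and small: "q\<^sup>2 < 2 * k" and empty: "cnt (left_nodes k) E 0 1 = 0"
    and E: "same_degrees (left_nodes k) right_nodes E (Eb k)"
      "beta (left_nodes k) right_nodes E = beta (left_nodes k) right_nodes (Eb k)"
    and E': "same_degrees (left_nodes k) right_nodes (bso_apply E S \<sigma>) (Eb k)"
      "beta (left_nodes k) right_nodes (bso_apply E S \<sigma>) = beta (left_nodes k) right_nodes (Eb k)"
  shows "cnt (left_nodes k) (bso_apply E S \<sigma>) 0 1 = 0"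
proof -
  let ?L = "left_nodes k" and ?E' = "bso_apply E S \<sigma>"
  have sub': "?E' \<subseteq> ?L \<times> right_nodes" by (rule bso_apply_subset_Times[OF sub bso])
  have "int (cnt ?L E 0 2) + int (cnt ?L E 0 3) = 6 * int k"
    "(int (cnt ?L E 0 2))\<^sup>2 + (int (cnt ?L E 0 3))\<^sup>2 = 18 * (int k)\<^sup>2"
    using class_counts_on_circle[OF sub E] empty by simp_all
  hence base: "int (cnt ?L E 0 2) = 3 * int k" "int (cnt ?L E 0 3) = 3 * int k"
    using circle_meets_plane_x_eq_0 by blast+
  have close: "\<bar>int (cnt ?L E a b) - int (cnt ?L ?E' a b)\<bar> \<le> int q" for a b
    using card_nbhd_class_bso_apply_diff_le[OF left_nodes_right_nodes(1) bso] .
  have "\<bar>int (cnt ?L ?E' 0 1)\<bar> \<le> int q"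
    "\<bar>int (cnt ?L ?E' 0 2) - 3 * int k\<bar> \<le> int q"
    "\<bar>int (cnt ?L ?E' 0 3) - 3 * int k\<bar> \<le> int q"
    using close[of 0 1] close[of 0 2] close[of 0 3] empty base by (simp_all add: abs_minus_commute)
  moreover have "(int q)\<^sup>2 < 2 * int k"
    using small by (metis of_nat_less_iff of_nat_mult of_nat_numeral of_nat_power)
  ultimately have "int (cnt ?L ?E' 0 1) = 0"
    by (rule circle_points_near_0_3k_3k[OF class_counts_on_circle[OF sub' E']])
  thus ?thesis by simp
qed

lemma small_bso_sequence_keeps_class_01_empty:
  fixes ops :: "((node \<times> node) list \<times> (nat \<Rightarrow> nat)) list" and G :: "nat \<Rightarrow> bedges"
  assumes start: "G 0 = Eb k"
    and steps: "\<forall>i < length ops. is_bso (G i) (length (fst (ops ! i))) (fst (ops ! i)) (snd (ops ! i))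
      \<and> G (Suc i) = bso_apply (G i) (fst (ops ! i)) (snd (ops ! i))"
    and invariant: "\<forall>i \<in> {1..length ops}. same_degrees (left_nodes k) right_nodes (G i) (Eb k)
      \<and> beta (left_nodes k) right_nodes (G i) = beta (left_nodes k) right_nodes (Eb k)"
    and small: "\<forall>i < length ops. (length (fst (ops ! i)))\<^sup>2 < 2 * k"
  shows "n \<le> length ops \<Longrightarrow> G n \<subseteq> left_nodes k \<times> right_nodes \<and> cnt (left_nodes k) (G n) 0 1 = 0"
proof (induction n)
  case 0
  show ?case using start bip_graph_Eb Eb_cnt(1) by (simp add: bip_graph_def)
next
  case (Suc i)
  have inv: "same_degrees (left_nodes k) right_nodes (G j) (Eb k)
      \<and> beta (left_nodes k) right_nodes (G j) = beta (left_nodes k) right_nodes (Eb k)"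
    if "j \<le> length ops" for j
    using that start invariant by (cases j) (auto simp: same_degrees_def)
  obtain S \<sigma> where op: "ops ! i = (S, \<sigma>)" by fastforce
  have "i < length ops" using Suc.prems by simp
  hence "is_bso (G i) (length S) S \<sigma>" "G (Suc i) = bso_apply (G i) S \<sigma>"
    "(length S)\<^sup>2 < 2 * k"
    using steps small op by (metis fst_conv snd_conv)+
  moreover have "G i \<subseteq> left_nodes k \<times> right_nodes" "cnt (left_nodes k) (G i) 0 1 = 0"
    using Suc by simp_all
  ultimately show ?case
    using small_bso_keeps_class_01_empty inv[of i] inv[of "Suc i"] Suc.prems
      bso_apply_subset_Times by auto
qed

lemma bso_sequence_from_Eb_to_Ee_has_large_step:
  fixes ops :: "((node \<times> node) list \<times> (nat \<Rightarrow> nat)) list" and G :: "nat \<Rightarrow> bedges"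
  assumes "0 < k" and start: "G 0 = Eb k" and finish: "G (length ops) = Ee k"
    and steps: "\<forall>i < length ops. is_bso (G i) (length (fst (ops ! i))) (fst (ops ! i)) (snd (ops ! i))
      \<and> G (Suc i) = bso_apply (G i) (fst (ops ! i)) (snd (ops ! i))"
    and invariant: "\<forall>i \<in> {1..length ops}. same_degrees (left_nodes k) right_nodes (G i) (Eb k)
      \<and> beta (left_nodes k) right_nodes (G i) = beta (left_nodes k) right_nodes (Eb k)"
  shows "\<exists>l < length ops. 2 * k \<le> (length (fst (ops ! l)))\<^sup>2"
proof (rule ccontr)
  assume "\<not> ?thesis"
  hence "\<forall>i < length ops. (length (fst (ops ! i)))\<^sup>2 < 2 * k" by (simp add: not_le)
  hence "cnt (left_nodes k) (G (length ops)) 0 1 = 0"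
    using small_bso_sequence_keeps_class_01_empty[OF start steps invariant] by blast
  thus False using finish Ee_cnt(1) \<open>0 < k\<close> by simp
qed

theorem theorem1:
  fixes qbar :: nat
  assumes "qbar > 1"
  shows "\<exists>L R Eb Ee. bip_graph L R Eb \<and> bip_graph L R Ee \<and> \<not> bip_iso L R Eb Ee \<and>
     same_degrees L R Eb Ee \<and> beta L R Eb = beta L R Ee \<and>
     (\<forall>(ops :: ((node \<times> node) list \<times> (nat \<Rightarrow> nat)) list) (G :: nat \<Rightarrow> bedges).
        G 0 = Eb \<longrightarrow> G (length ops) = Ee \<longrightarrow>
        (\<forall>i < length ops. is_bso (G i) (length (fst (ops ! i))) (fst (ops ! i)) (snd (ops ! i)) \<and>
                          G (Suc i) = bso_apply (G i) (fst (ops ! i)) (snd (ops ! i))) \<longrightarrow>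
        (\<forall>i \<in> {1..length ops}. same_degrees L R (G i) Eb \<and> beta L R (G i) = beta L R Eb) \<longrightarrow>
        (\<exists>l < length ops. length (fst (ops ! l)) \<ge> qbar))"
proof -
  define k where "k = qbar\<^sup>2"
  have "0 < k" using assms by (simp add: k_def)
  have qbar_le: "qbar \<le> n" if "2 * k \<le> n\<^sup>2" for n :: nat
  proof -
    have "qbar\<^sup>2 < n\<^sup>2" using that \<open>0 < k\<close> unfolding k_def by linarith
    thus ?thesis by (simp add: power_less_imp_less_base less_imp_le)
  qed
  show ?thesis
    by (rule exI[of _ "left_nodes k"], rule exI[of _ right_nodes], rule exI[of _ "Eb k"],
        rule exI[of _ "Ee k"])
      (use bip_graph_Eb bip_graph_Ee Eb_Ee_not_iso[OF \<open>0 < k\<close>] same_degrees_Eb_Ee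
        beta_Eb_eq_beta_Ee bso_sequence_from_Eb_to_Ee_has_large_step[OF \<open>0 < k\<close>] qbar_le in blast)
qed

end
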